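(* Let $n\ge3$ and let $t\ge0$ be an integer with $r_t=1$. Then $\mathcal{L}_t=\{x_1^{t+1}\partial_n\}$.
   Context: Fix an integer $n\ge 3$. A partition is a sequence $\Lambda=(\lambda_j)_{j\ge1}$ of non-negative integers with finite support; $\mathrm{wt}(\Lambda)=\sum_j j\lambda_j$; $\mathrm{Part}(k)$ is the set of partitions with $\lambda_j=0$ for $j>k$. Write $x^\Lambda=\prod_j x_j^{\lambda_j}$, $\deg(x^\Lambda)=\sum_j\lambda_j$. $\mathcal{B}=\{x^\Lambda\partial_k : 1\le k\le n,\ \Lambda\in\mathrm{Part}(k-1)\}$. For an integer $i\ge-1$, let $r_i\in\{1,\dots,n-1\}$ with $i\equiv r_i\pmod{n-1}$ and $h_i=\lfloor (i-1)/(n-1)\rfloor+1$. Define $\mathrm{WD}(x^\Lambda\partial_k)=\mathrm{wt}(\Lambda)-\deg(x^\Lambda)+n-k$ and $\mathrm{lev}_i(x^\Lambda\partial_k)=h_i\,\mathrm{WD}(x^\Lambda\partial_k)+\deg(x^\Lambda)-1$. For $i\ge-1$, $\mathcal{N}_i=\{b\in\mathcal{B}: \mathrm{lev}_j(b)\le j\text{ for some integer } -1\le j\le i\}$, and $\mathcal{L}_i=\mathcal{N}_i\setminus\mathcal{N}_{i-1}$ for $i\ge0$. *)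

theory Defs
  imports Complex_Main
begin

text \<open>A partition is a finitely supported sequence (lambda_j) for j >= 1, encoded as a
function nat => nat whose value at index 0 is 0 (index 0 is unused).\<close>

definition partition :: "(nat \<Rightarrow> nat) \<Rightarrow> bool" where
  "partition L \<longleftrightarrow> L 0 = 0 \<and> finite {j. L j \<noteq> 0}"

definition Part :: "nat \<Rightarrow> (nat \<Rightarrow> nat) set" where
  "Part k = {L. partition L \<and> (\<forall>j>k. L j = 0)}"

definition wt :: "(nat \<Rightarrow> nat) \<Rightarrow> int" where
  "wt L = (\<Sum>j\<in>{j. L j \<noteq> 0}. int j * int (L j))"

definition pdeg :: "(nat \<Rightarrow> nat) \<Rightarrow> int" where
  "pdeg L = (\<Sum>j\<in>{j. L j \<noteq> 0}. int (L j))"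

text \<open>A basis element x^Lambda d_k is encoded as the pair (Lambda, k).\<close>

definition basis :: "nat \<Rightarrow> ((nat \<Rightarrow> nat) \<times> nat) set" where
  "basis n = {(L, k). 1 \<le> k \<and> k \<le> n \<and> L \<in> Part (k - 1)}"

definition rr :: "nat \<Rightarrow> int \<Rightarrow> int" where
  "rr n i = (i - 1) mod (int n - 1) + 1"

definition hh :: "nat \<Rightarrow> int \<Rightarrow> int" where
  "hh n i = \<lfloor>of_int (i - 1) / (of_int (int n - 1) :: real)\<rfloor> + 1"

definition WD :: "nat \<Rightarrow> (nat \<Rightarrow> nat) \<times> nat \<Rightarrow> int" where
  "WD n b = wt (fst b) - pdeg (fst b) + int n - int (snd b)"

definition lev :: "nat \<Rightarrow> int \<Rightarrow> (nat \<Rightarrow> nat) \<times> nat \<Rightarrow> int" where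
  "lev n i b = hh n i * WD n b + pdeg (fst b) - 1"

definition NN :: "nat \<Rightarrow> int \<Rightarrow> ((nat \<Rightarrow> nat) \<times> nat) set" where
  "NN n i = {b \<in> basis n. \<exists>j::int. -1 \<le> j \<and> j \<le> i \<and> lev n j b \<le> j}"

definition LL :: "nat \<Rightarrow> int \<Rightarrow> ((nat \<Rightarrow> nat) \<times> nat) set" where
  "LL n i = NN n i - NN n (i - 1)"

end

theory Submission
  imports Defs
begin

text \<open>Writing \<open>w = WD(b) \<ge> 0\<close> and \<open>d = deg(x\<^sup>\<Lambda>)\<close>, the level \<open>lev\<^sub>i(b) = h\<^sub>i w + d - 1\<close> depends
  on \<open>i\<close> only through \<open>h\<^sub>i\<close>, and \<open>r\<^sub>t = 1\<close> means exactly that \<open>h\<^sub>t = h\<^sub>t\<^sub>-\<^sub>1 + 1\<close>.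
  An element of \<open>\<L>\<^sub>t\<close> has \<open>lev\<^sub>t(b) \<le> t < lev\<^sub>t\<^sub>-\<^sub>1(b) + 1\<close>, i.e.
  \<open>(h + 1) w + d \<le> t + 1 \<le> h w + d\<close>, which forces \<open>w = 0\<close> and \<open>d = t + 1\<close>.
  Since every \<open>\<lambda>\<^sub>j\<close> contributes \<open>(j - 1) \<lambda>\<^sub>j\<close> and \<open>n - k\<close> to \<open>w\<close>, \<open>w = 0\<close> means \<open>k = n\<close> and
  \<open>\<Lambda>\<close> is supported on \<open>{1}\<close>, so \<open>b = x\<^sub>1\<^sup>t\<^sup>+\<^sup>1 \<partial>\<^sub>n\<close>; conversely this element has level \<open>t\<close>
  for every \<open>i\<close>.\<close>

definition x1_pow :: "nat \<Rightarrow> nat \<Rightarrow> nat" where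
  "x1_pow a = (\<lambda>j. if j = 1 then a else 0)"

lemma wt_minus_pdeg:
  "wt L - pdeg L = (\<Sum>j\<in>{j. L j \<noteq> 0}. (int j - 1) * int (L j))"
  unfolding wt_def pdeg_def by (simp add: sum_subtractf[symmetric] algebra_simps)

lemma partition_support_weight_nonneg:
  assumes "partition L"
  shows "0 \<le> (int j - 1) * int (L j)"
  using assms unfolding partition_def by (cases j) auto

lemma pdeg_le_wt:
  assumes "partition L"
  shows "pdeg L \<le> wt L"
proof -
  have "0 \<le> (\<Sum>j\<in>{j. L j \<noteq> 0}. (int j - 1) * int (L j))"
    using partition_support_weight_nonneg[OF assms] by (intro sum_nonneg)
  then show ?thesis
    using wt_minus_pdeg[of L] by linarith
qed

lemma partition_eq_x1_pow_if_wt_eq_pdeg: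
  assumes "partition L" and "wt L = pdeg L"
  shows "L = x1_pow (L 1)"
proof
  fix j
  let ?S = "{j. L j \<noteq> 0}"
  have "(\<Sum>i\<in>?S. (int i - 1) * int (L i)) = 0"
    using assms(2) wt_minus_pdeg[of L] by linarith
  moreover have "finite ?S"
    using assms(1) unfolding partition_def by simp
  ultimately have "\<forall>i\<in>?S. (int i - 1) * int (L i) = 0"
    using partition_support_weight_nonneg[OF assms(1)] by (simp add: sum_nonneg_eq_0_iff)
  moreover have "j \<noteq> 0" if "L j \<noteq> 0"
    using assms(1) that unfolding partition_def by (cases j) auto
  ultimately show "L j = x1_pow (L 1) j"
    unfolding x1_pow_def by (cases "L j = 0") auto
qed

lemma support_x1_pow: "{j. x1_pow a j \<noteq> 0} = (if a = 0 then {} else {1})"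
  unfolding x1_pow_def by auto

lemma wt_x1_pow [simp]: "wt (x1_pow a) = int a"
  unfolding wt_def support_x1_pow by (simp add: x1_pow_def)

lemma pdeg_x1_pow [simp]: "pdeg (x1_pow a) = int a"
  unfolding pdeg_def support_x1_pow by (simp add: x1_pow_def)

lemma x1_pow_dn_in_basis:
  assumes "2 \<le> n"
  shows "(x1_pow a, n) \<in> basis n"
  using assms unfolding basis_def Part_def partition_def support_x1_pow
  by (auto simp: x1_pow_def)

lemma WD_nonneg:
  assumes "b \<in> basis n"
  shows "0 \<le> WD n b"
proof -
  obtain L k where b: "b = (L, k)" and "k \<le> n" and "partition L"
    using assms unfolding basis_def Part_def by auto
  then show ?thesis
    using pdeg_le_wt[of L] unfolding WD_def b by simp
qed

lemma WD_eq_0_imp_x1_pow_dn: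
  assumes "b \<in> basis n" and "WD n b = 0"
  shows "b = (x1_pow (fst b 1), n)"
proof -
  obtain L k where b: "b = (L, k)" and k: "k \<le> n" and L: "partition L"
    using assms(1) unfolding basis_def Part_def by auto
  have "k = n" and "wt L = pdeg L"
    using assms(2) k pdeg_le_wt[OF L] unfolding b WD_def by auto
  then show ?thesis
    using partition_eq_x1_pow_if_wt_eq_pdeg[OF L] b by (metis fst_conv)
qed

lemma hh_eq_div: "hh n i = (i - 1) div (int n - 1) + 1"
  unfolding hh_def floor_divide_of_int_eq by (rule refl)

lemma hh_step_if_rr_eq_1:
  assumes "2 \<le> n" and "rr n t = 1"
  shows "hh n t = hh n (t - 1) + 1"
proof -
  define m where "m = int n - 1"
  have m: "1 \<le> m"
    using assms(1) unfolding m_def by simp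
  obtain q where q: "t - 1 = m * q"
    using assms(2) unfolding rr_def m_def[symmetric] by auto
  have "(m * q - 1) div m = ((m - 1) + (q - 1) * m) div m"
    by (simp add: algebra_simps)
  also have "\<dots> = q - 1"
    using m by (subst div_mult_self1) simp_all
  finally show ?thesis
    using q
    using m unfolding hh_eq_div m_def[symmetric] by (simp add: algebra_simps)
qed

lemma mem_LL_iff:
  "b \<in> LL n t \<longleftrightarrow>
     b \<in> basis n \<and> -1 \<le> t \<and> lev n t b \<le> t \<and> (\<forall>j. -1 \<le> j \<longrightarrow> j < t \<longrightarrow> j < lev n j b)"
  unfolding LL_def NN_def by (auto simp: not_le) (metis linorder_less_linear linorder_not_le)

theorem LL_eq_x1_pow_dn_if_hh_step:
  assumes "2 \<le> n" and "0 \<le> t" and step: "hh n t = hh n (t - 1) + 1"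
  shows "LL n t = {(x1_pow (nat (t + 1)), n)}"
proof -
  define b0 where "b0 = (x1_pow (nat (t + 1)), n)"
  have "b0 \<in> basis n"
    unfolding b0_def using x1_pow_dn_in_basis[OF assms(1)] .
  moreover have "lev n i b0 = t" for i
    using assms(2) unfolding b0_def lev_def WD_def by simp
  ultimately have "b0 \<in> LL n t"
    using assms(2) by (simp add: mem_LL_iff)
  moreover have "b = b0" if "b \<in> LL n t" for b
  proof -
    define h where "h = hh n (t - 1)"
    define w where "w = WD n b"
    define d where "d = pdeg (fst b)"
    have b: "b \<in> basis n"
      using that by (simp add: mem_LL_iff)
    have upper: "(h + 1) * w + d - 1 \<le> t"
      using that step by (simp add: mem_LL_iff lev_def h_def w_def d_def)
    have lower: "t - 1 < h * w + d - 1"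
      using that assms(2) by (simp add: mem_LL_iff lev_def h_def w_def d_def)
    have "0 \<le> w"
      unfolding w_def using b by (rule WD_nonneg)
    with upper lower have "w = 0"
      by (simp add: algebra_simps)
    with upper lower have "d = t + 1"
      by simp
    have "b = (x1_pow (fst b 1), n)"
      using WD_eq_0_imp_x1_pow_dn[OF b] \<open>w = 0\<close> unfolding w_def by simp
    moreover have "fst b 1 = nat (t + 1)"
      using \<open>d = t + 1\<close> calculation unfolding d_def by (metis pdeg_x1_pow fst_conv nat_int)
    ultimately show "b = b0"
      unfolding b0_def by simp
  qed
  ultimately show ?thesis
    unfolding b0_def by blast
qed

theorem corollary2p10:
  fixes n :: nat and t :: int
  assumes "n \<ge> 3" and "t \<ge> 0" and "rr n t = 1"
  shows "LL n t = {((\<lambda>j. if j = 1 then nat (t + 1) else 0), n)}"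
proof -
  have n: "2 \<le> n"
    using assms(1) by simp
  then have "hh n t = hh n (t - 1) + 1"
    using assms(3) by (rule hh_step_if_rr_eq_1)
  with n assms(2) have "LL n t = {(x1_pow (nat (t + 1)), n)}"
    by (rule LL_eq_x1_pow_dn_if_hh_step)
  then show ?thesis
    unfolding x1_pow_def .
qed

end
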